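(* For each $k\ge 1$ there is a monic polynomial $P_k$ of degree $k$ (with rational coefficients) such that for all $n\ge 2$ the number of $k$-chains of $(\mathsf{Tr}(n),\preccurlyeq)$ equals $$\sum_{i=0}^{k}\mathfrak{z}_i(n,k)=(k+1)^{\,n-(k+1)}\,P_k(n).$$
   Context: A triword of size $n$ is a word $u=u_1\cdots u_n$ with $u_i\in\{0,1,2\}$, $u_1\ne 2$, and such that $u_i=0$ implies $u_j\neq 1$ for all $j>i$; $\mathsf{Tr}(n)$ is their set, ordered componentwise ($u\preccurlyeq v$ iff $u_i\le v_i$ for all $i$). A $k$-chain of $\mathsf{Tr}(n)$ is a sequence $[u^{(1)},\dots,u^{(k)}]$ of triwords of size $n$ with $u^{(1)}\preccurlyeq\cdots\preccurlyeq u^{(k)}$ (repetitions allowed). For $i\in[0,k]$, $\mathfrak{z}_i(n,k)$ is the number of $k$-chains in which exactly the last $i$ words $u^{(k-i+1)},\dots,u^{(k)}$ do not contain the letter $0$ (and the first $k-i$ do). *)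

theory Defs
  imports Main "HOL-Computational_Algebra.Polynomial"
begin

text \<open>Words are lists of naturals; position i (0-based) corresponds to u_(i+1).\<close>

definition is_triword :: "nat \<Rightarrow> nat list \<Rightarrow> bool" where
  "is_triword n u \<longleftrightarrow> length u = n \<and> set u \<subseteq> {0,1,2}
     \<and> (u \<noteq> [] \<longrightarrow> hd u \<noteq> 2)
     \<and> (\<forall>i j. i < j \<and> j < n \<and> u ! i = 0 \<longrightarrow> u ! j \<noteq> 1)"

definition Tr :: "nat \<Rightarrow> nat list set" where
  "Tr n = {u. is_triword n u}"

definition word_le :: "nat list \<Rightarrow> nat list \<Rightarrow> bool" where
  "word_le u v \<longleftrightarrow> length u = length v \<and> (\<forall>i < length u. u ! i \<le> v ! i)"

definition chains :: "nat \<Rightarrow> nat \<Rightarrow> nat list list set" where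
  "chains n k = {c. length c = k \<and> (\<forall>j < k. c ! j \<in> Tr n)
       \<and> (\<forall>j. Suc j < k \<longrightarrow> word_le (c ! j) (c ! Suc j))}"

definition zeta :: "nat \<Rightarrow> nat \<Rightarrow> nat \<Rightarrow> nat" where
  "zeta i n k = card {c \<in> chains n k.
       (\<forall>j < k. (j < k - i \<longrightarrow> 0 \<in> set (c ! j)) \<and> (k - i \<le> j \<longrightarrow> 0 \<notin> set (c ! j)))}"

end

theory Submission
  imports Defs
begin

(*
  Read a k-chain of triwords column by column. Since the chain is increasing, every column is a
  word 0^a 1^b 2^(k-a-b), and the words of the chain containing a 0 form a prefix of the chain,
  say of length M. Appending the column (a, b) keeps a chain iff b = 0 or M <= a (and, for the
  first column, a + b = k), and it changes M into max M a. After the first column there are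
  k + 1 ways to keep M and k + 1 - M' ways to reach a given M' > M, so the vector v_n of counts
  by M satisfies v_(n+1) = (k + 1) v_n + N v_n with N strictly lower triangular, hence nilpotent.
  Therefore v_(m+1) = sum_j (m choose j) (k + 1)^(m-j) N^j v_1, and summing over M gives
  (k + 1)^(m-k) times a polynomial in n = m + 1 of degree k with leading coefficient
  (N^k v_1)_k / k! = 1.
*)

section \<open>Binomial expansion of a nilpotent linear recurrence\<close>

lemma sum_Suc_choose_mult:
  fixes f :: "nat \<Rightarrow> 'a::comm_semiring_1"
  shows "(\<Sum>j\<le>k. of_nat (Suc m choose j) * f j) =
     (\<Sum>j\<le>k. of_nat (m choose j) * f j) + (\<Sum>j<k. of_nat (m choose j) * f (Suc j))"
  by (induction k) (simp_all add: algebra_simps)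

lemma power_int_diff_split:
  fixes x :: "'a::field"
  assumes "x \<noteq> 0" "j \<le> k"
  shows "x powi (int m - int j) = x powi (int m - int k) * x ^ (k - j)"
proof -
  have "x powi (int m - int j) = x powi ((int m - int k) + int (k - j))"
    using assms(2) by simp
  also have "\<dots> = x powi (int m - int k) * x powi int (k - j)"
    by (rule power_int_add) (simp add: assms(1))
  finally show ?thesis
    by (simp only: power_int_of_nat)
qed

lemma linear_operator_sum:
  fixes N :: "('i \<Rightarrow> 'a::comm_ring_1) \<Rightarrow> 'i \<Rightarrow> 'a"
  assumes add: "\<And>u v. N (\<lambda>i. u i + v i) = (\<lambda>i. N u i + N v i)"
    and scale: "\<And>c u. N (\<lambda>i. c * u i) = (\<lambda>i. c * N u i)"
  shows "N (\<lambda>i. \<Sum>j\<in>A. f j i) = (\<lambda>i. \<Sum>j\<in>A. N (f j) i)"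
proof (induction A rule: infinite_finite_induct)
  case (insert j A)
  then show ?case
    using add[of "f j"] by simp
qed (use scale[of 0] in simp_all)

(* Terms with j > m vanish since m choose j = 0, so the negative exponents of powi do no harm. *)
lemma linear_recurrence_binomial:
  fixes N :: "('i \<Rightarrow> 'a::field) \<Rightarrow> 'i \<Rightarrow> 'a" and x :: "nat \<Rightarrow> 'i \<Rightarrow> 'a"
  assumes add: "\<And>u v. N (\<lambda>i. u i + v i) = (\<lambda>i. N u i + N v i)"
    and scale: "\<And>c u. N (\<lambda>i. c * u i) = (\<lambda>i. c * N u i)"
    and nilpotent: "(N ^^ Suc k) (x 0) = (\<lambda>i. 0)"
    and "K \<noteq> 0"
    and step: "\<And>m. x (Suc m) = (\<lambda>i. K * x m i + N (x m) i)"
  shows "x m i = (\<Sum>j\<le>k. of_nat (m choose j) * K powi (int m - int j) * (N ^^ j) (x 0) i)"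
proof (induction m arbitrary: i)
  case 0
  have "(\<Sum>j\<le>k. of_nat (0 choose j) * K powi (- int j) * (N ^^ j) (x 0) i) =
      (\<Sum>j\<in>{0}. of_nat (0 choose j) * K powi (- int j) * (N ^^ j) (x 0) i)"
    by (intro sum.mono_neutral_right) (auto simp: binomial_eq_0)
  then show ?case
    by simp
next
  case (Suc m)
  define a where "a j = (N ^^ j) (x 0)" for j
  define f where "f j i = K powi (1 + int m - int j) * a j i" for j i
  have shift: "K powi (1 + int m - int j) = K * K powi (int m - int j)" for j
    using power_int_add_1'[of K "int m - int j"] \<open>K \<noteq> 0\<close> by (simp add: algebra_simps)
  have "K * x m i = (\<Sum>j\<le>k. of_nat (m choose j) * f j i)"
    unfolding Suc.IH f_def a_def sum_distrib_left
    by (intro sum.cong refl) (simp add: shift)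
  moreover have "N (x m) i = (\<Sum>j<k. of_nat (m choose j) * f (Suc j) i)"
  proof -
    define c where "c j = of_nat (m choose j) * K powi (int m - int j)" for j
    have "x m = (\<lambda>i. \<Sum>j\<le>k. c j * a j i)"
      using Suc.IH by (simp add: a_def c_def fun_eq_iff)
    then have "N (x m) = (\<lambda>i. \<Sum>j\<le>k. N (\<lambda>i. c j * a j i) i)"
      using linear_operator_sum[of N, OF add scale] by simp
    then have "N (x m) i = (\<Sum>j\<le>k. c j * a (Suc j) i)"
      by (simp add: scale a_def)
    also have "\<dots> = (\<Sum>j<k. c j * a (Suc j) i)"
      using nilpotent by (simp add: lessThan_Suc_atMost[symmetric] a_def)
    finally show ?thesis
      by (simp add: f_def c_def mult.assoc)
  qed
  ultimately show ?case
    using step sum_Suc_choose_mult[where f = "\<lambda>j. f j i"] by (simp add: f_def a_def mult.assoc)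
qed

lemma binomial_sum_poly:
  fixes c :: "nat \<Rightarrow> 'a::field_char_0"
  assumes "c k \<noteq> 0"
  shows "\<exists>P. degree P = k \<and> lead_coeff P = c k / fact k \<and>
    (\<forall>m. poly P (of_nat (Suc m)) = (\<Sum>j\<le>k. of_nat (m choose j) * c j))"
proof -
  define B :: "nat \<Rightarrow> 'a poly" where "B j = (\<Prod>i<j. [:- of_nat (Suc i), 1:])" for j
  have poly_B: "poly (B j) (of_nat (Suc m)) = fact j * of_nat (m choose j)" for j m
  proof -
    have "poly (B j) (of_nat (Suc m)) = (\<Prod>i<j. of_nat m - of_nat i)"
      by (simp add: B_def poly_prod)
    also have "\<dots> = (of_nat m gchoose j) * fact j"
      by (simp add: gbinomial_prod_rev atLeast0LessThan)
    finally show ?thesis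
      by (simp add: binomial_gbinomial)
  qed
  have degree_B: "degree (B j) = j" for j
    by (simp add: B_def degree_prod_eq_sum_degree)
  have lead_coeff_B: "lead_coeff (B j) = 1" for j
    unfolding B_def lead_coeff_prod by simp
  define P where "P = (\<Sum>j\<le>k. smult (c j / fact j) (B j))"
  have "degree P = k \<and> lead_coeff P = c k / fact k"
  proof (cases "k = 0")
    case False
    have P_split: "P = (\<Sum>j<k. smult (c j / fact j) (B j)) + smult (c k / fact k) (B k)"
      by (simp add: P_def lessThan_Suc_atMost[symmetric])
    have "degree (\<Sum>j<k. smult (c j / fact j) (B j)) < k"
      using False by (intro degree_sum_less) (auto intro: le_less_trans[OF degree_smult_le] simp: degree_B)
    moreover have top: "degree (smult (c k / fact k) (B k)) = k"
      using \<open>c k \<noteq> 0\<close> by (simp add: degree_B)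
    ultimately have lower: "degree (\<Sum>j<k. smult (c j / fact j) (B j)) < degree (smult (c k / fact k) (B k))"
      by (simp only: top)
    have "degree P = k"
      unfolding P_split degree_add_eq_right[OF lower] by (rule top)
    moreover have "lead_coeff P = lead_coeff (smult (c k / fact k) (B k))"
      unfolding P_split by (rule lead_coeff_add_le[OF lower])
    ultimately show ?thesis
      by (simp only: lead_coeff_smult lead_coeff_B mult_1_right)
  qed (simp add: P_def B_def)
  moreover have "poly P (of_nat (Suc m)) = (\<Sum>j\<le>k. of_nat (m choose j) * c j)" for m
    unfolding P_def poly_sum poly_smult poly_B by (intro sum.cong refl) simp
  ultimately show ?thesis
    by blast
qed

section \<open>Triwords and chains\<close>

lemma no_one_after_zero_snoc:
  assumes "length w = n"
  shows "(\<forall>i j. i < j \<and> j < Suc n \<and> (w @ [x]) ! i = 0 \<longrightarrow> (w @ [x]) ! j \<noteq> 1) \<longleftrightarrow>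
    (\<forall>i j. i < j \<and> j < n \<and> w ! i = 0 \<longrightarrow> w ! j \<noteq> 1) \<and> (x = 1 \<longrightarrow> 0 \<notin> set w)"
    (is "?all \<longleftrightarrow> ?prefix \<and> ?last")
proof
  assume all: ?all
  have nth_w: "(w @ [x]) ! i = w ! i" if "i < n" for i
    using that assms by (simp add: nth_append)
  have "(w @ [x]) ! n = x"
    by (simp add: assms[symmetric])
  show "?prefix \<and> ?last"
  proof
    show ?prefix
    proof (intro allI impI)
      fix i j assume "i < j \<and> j < n \<and> w ! i = 0"
      then show "w ! j \<noteq> 1"
        using all[rule_format, of i j] by (simp add: nth_w)
    qed
    show ?last
    proof (intro impI notI)
      assume "x = 1" "0 \<in> set w"
      then obtain i where "i < n" "w ! i = 0"
        using assms by (auto simp: in_set_conv_nth)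
      then show False
        using all[rule_format, of i n] nth_w[of i] \<open>(w @ [x]) ! n = x\<close> \<open>x = 1\<close> by simp
    qed
  qed
next
  assume prefix_last: "?prefix \<and> ?last"
  show ?all
  proof (intro allI impI)
    fix i j assume ij: "i < j \<and> j < Suc n \<and> (w @ [x]) ! i = 0"
    then have "i < n" "w ! i = 0"
      using assms by (auto simp: nth_append)
    then have "0 \<in> set w"
      using assms nth_mem by metis
    then show "(w @ [x]) ! j \<noteq> 1"
      using ij prefix_last assms \<open>i < n\<close> \<open>w ! i = 0\<close>
      by (cases "j < n") (auto simp: nth_append less_Suc_eq)
  qed
qed

lemma is_triword_snoc:
  "is_triword (Suc n) (w @ [x]) \<longleftrightarrow>
     is_triword n w \<and> x \<le> 2 \<and> (n = 0 \<longrightarrow> x \<noteq> 2) \<and> (x = 1 \<longrightarrow> 0 \<notin> set w)"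
proof (cases "length w = n")
  case True
  show ?thesis
    unfolding is_triword_def no_one_after_zero_snoc[OF True] using True
    by (cases w) auto
next
  case False
  then show ?thesis
    by (simp add: is_triword_def)
qed

lemma length_Tr: "w \<in> Tr n \<Longrightarrow> length w = n"
  by (simp add: Tr_def is_triword_def)

lemma finite_Tr: "finite (Tr n)"
proof (rule finite_subset)
  show "Tr n \<subseteq> {w. set w \<subseteq> {0, 1, 2} \<and> length w = n}"
    by (auto simp: Tr_def is_triword_def)
qed (simp add: finite_lists_length_eq)

lemma finite_chains: "finite (chains n k)"
proof (rule finite_subset)
  show "chains n k \<subseteq> {c. set c \<subseteq> Tr n \<and> length c = k}"
    by (auto simp: chains_def in_set_conv_nth)
qed (simp add: finite_lists_length_eq finite_Tr)

lemma word_le_refl: "word_le u u"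
  by (simp add: word_le_def)

lemma word_le_trans: "word_le u v \<Longrightarrow> word_le v w \<Longrightarrow> word_le u w"
  unfolding word_le_def by (metis le_trans)

lemma word_le_zero: "word_le u v \<Longrightarrow> 0 \<in> set v \<Longrightarrow> 0 \<in> set u"
  unfolding word_le_def by (metis in_set_conv_nth le_0_eq)

lemma word_le_snoc:
  "length u = length v \<Longrightarrow> word_le (u @ [x]) (v @ [y]) \<longleftrightarrow> word_le u v \<and> x \<le> y"
  unfolding word_le_def by (auto simp: nth_append less_Suc_eq)

lemma chain_word_le:
  assumes "c \<in> chains n k" "i \<le> j" "j < k"
  shows "word_le (c ! i) (c ! j)"
  using assms(2,3)
proof (induction j)
  case (Suc j)
  show ?case
  proof (cases "i = Suc j")
    case False
    then have "word_le (c ! i) (c ! j)"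
      using Suc by simp
    moreover have "word_le (c ! j) (c ! Suc j)"
      using assms(1) Suc.prems by (simp add: chains_def)
    ultimately show ?thesis
      by (rule word_le_trans)
  qed (simp add: word_le_refl)
qed (simp add: word_le_refl)

lemma down_closed_eq_lessThan:
  fixes S :: "nat set"
  assumes "finite S" "\<And>i j. i \<le> j \<Longrightarrow> j \<in> S \<Longrightarrow> i \<in> S"
  shows "S = {..<card S}"
proof (cases "S = {}")
  case False
  then have "S = {..Max S}"
    using assms by (auto intro: Max_ge Max_in)
  then show ?thesis
    by (metis card_atMost lessThan_Suc_atMost)
qed simp

definition zero_words :: "nat \<Rightarrow> nat list list \<Rightarrow> nat" where
  "zero_words k c = card {j. j < k \<and> 0 \<in> set (c ! j)}"

lemma zero_words_le: "zero_words k c \<le> k"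
  unfolding zero_words_def using card_mono[of "{..<k}" "{j. j < k \<and> 0 \<in> set (c ! j)}"] by auto

lemma zero_in_chain_iff:
  assumes "c \<in> chains n k" "j < k"
  shows "0 \<in> set (c ! j) \<longleftrightarrow> j < zero_words k c"
proof -
  have "{j. j < k \<and> 0 \<in> set (c ! j)} = {..<zero_words k c}"
    unfolding zero_words_def
    by (rule down_closed_eq_lessThan) (auto intro: word_le_zero chain_word_le[OF assms(1)])
  then show ?thesis
    using assms(2) by blast
qed

section \<open>Appending a column to a chain\<close>

definition append_column :: "(nat \<Rightarrow> nat) \<Rightarrow> nat list list \<Rightarrow> nat list list" where
  "append_column x c = map (\<lambda>j. c ! j @ [x j]) [0..<length c]"

lemma length_append_column [simp]: "length (append_column x c) = length c"
  by (simp add: append_column_def)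

lemma nth_append_column [simp]: "j < length c \<Longrightarrow> append_column x c ! j = c ! j @ [x j]"
  by (simp add: append_column_def)

lemma append_column_in_chains_iff:
  assumes "length c = k"
  shows "append_column x c \<in> chains (Suc n) k \<longleftrightarrow> c \<in> chains n k \<and>
    (\<forall>j<k. x j \<le> 2 \<and> (n = 0 \<longrightarrow> x j \<noteq> 2) \<and> (x j = 1 \<longrightarrow> 0 \<notin> set (c ! j))) \<and>
    (\<forall>j. Suc j < k \<longrightarrow> x j \<le> x (Suc j))"
proof -
  have words: "append_column x c ! j \<in> Tr (Suc n) \<longleftrightarrow> c ! j \<in> Tr n \<and>
      x j \<le> 2 \<and> (n = 0 \<longrightarrow> x j \<noteq> 2) \<and> (x j = 1 \<longrightarrow> 0 \<notin> set (c ! j))" if "j < k" for j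
    using that assms by (simp add: Tr_def is_triword_snoc)
  have order: "word_le (append_column x c ! j) (append_column x c ! Suc j) \<longleftrightarrow>
      word_le (c ! j) (c ! Suc j) \<and> x j \<le> x (Suc j)"
    if "Suc j < k" "\<forall>j<k. c ! j \<in> Tr n" for j
  proof -
    have "length (c ! j) = length (c ! Suc j)"
      using that length_Tr by (metis Suc_lessD)
    then show ?thesis
      using that assms by (simp add: word_le_snoc)
  qed
  show ?thesis
    using assms words order by (auto simp: chains_def)
qed

definition column :: "nat \<Rightarrow> nat \<Rightarrow> nat \<Rightarrow> nat" where
  "column a b j = (if j < a then 0 else if j < a + b then 1 else 2)"

lemma card_column_eq_0:
  assumes "a + b \<le> k"
  shows "card {j. j < k \<and> column a b j = 0} = a"
proof -
  have "{j. j < k \<and> column a b j = 0} = {..<a}"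
    using assms by (auto simp: column_def)
  then show ?thesis
    by simp
qed

lemma card_column_le_1:
  assumes "a + b \<le> k"
  shows "card {j. j < k \<and> column a b j \<le> 1} = a + b"
proof -
  have "{j. j < k \<and> column a b j \<le> 1} = {..<a + b}"
    using assms by (auto simp: column_def)
  then show ?thesis
    by simp
qed

lemma column_inj:
  assumes "a + b \<le> k" "a' + b' \<le> k" "\<forall>j<k. column a b j = column a' b' j"
  shows "a = a' \<and> b = b'"
proof -
  have "{j. j < k \<and> column a b j = 0} = {j. j < k \<and> column a' b' j = 0}"
    "{j. j < k \<and> column a b j \<le> 1} = {j. j < k \<and> column a' b' j \<le> 1}"
    using assms(3) by auto
  then show ?thesis
    using assms(1,2) by (metis card_column_eq_0 card_column_le_1 add_left_cancel)
qed

lemma monotone_column_eq_column: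
  assumes "\<And>j. j < k \<Longrightarrow> x j \<le> 2" "\<And>i j. i \<le> j \<Longrightarrow> j < k \<Longrightarrow> x i \<le> x j"
  shows "\<exists>a b. a + b \<le> k \<and> (\<forall>j<k. x j = column a b j)"
proof -
  define A0 where "A0 = {j. j < k \<and> x j = 0}"
  define A1 where "A1 = {j. j < k \<and> x j \<le> 1}"
  have A0: "A0 = {..<card A0}" and A1: "A1 = {..<card A1}"
    unfolding A0_def A1_def by (rule down_closed_eq_lessThan; auto dest: assms(2))+
  have "A0 \<subseteq> A1" "A1 \<subseteq> {..<k}"
    by (auto simp: A0_def A1_def)
  then have "card A0 \<le> card A1" "card A1 \<le> k"
    by (metis card_mono finite_lessThan finite_subset card_lessThan)+
  show ?thesis
  proof (intro exI conjI allI impI)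
    show "card A0 + (card A1 - card A0) \<le> k"
      using \<open>card A0 \<le> card A1\<close> \<open>card A1 \<le> k\<close> by simp
    fix j assume "j < k"
    have "x j = 0 \<longleftrightarrow> j < card A0" "x j \<le> 1 \<longleftrightarrow> j < card A1"
      using A0 A1 \<open>j < k\<close> unfolding A0_def A1_def by blast+
    then show "x j = column (card A0) (card A1 - card A0) j"
      using assms(1)[OF \<open>j < k\<close>] \<open>card A0 \<le> card A1\<close> by (auto simp: column_def)
  qed
qed

lemma append_column_column_in_chains_iff:
  assumes "a + b \<le> k" "length c = k"
  shows "append_column (column a b) c \<in> chains (Suc n) k \<longleftrightarrow>
    c \<in> chains n k \<and> (n = 0 \<longrightarrow> a + b = k) \<and> (b = 0 \<or> zero_words k c \<le> a)"
proof -
  have "column a b j \<le> 2" "column a b j \<le> column a b (Suc j)" for j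
    by (simp_all add: column_def)
  then have "append_column (column a b) c \<in> chains (Suc n) k \<longleftrightarrow> c \<in> chains n k \<and>
      (n = 0 \<longrightarrow> (\<forall>j<k. column a b j \<noteq> 2)) \<and> (\<forall>j<k. column a b j = 1 \<longrightarrow> 0 \<notin> set (c ! j))"
    unfolding append_column_in_chains_iff[OF assms(2)] by auto
  moreover have "(\<forall>j<k. column a b j \<noteq> 2) \<longleftrightarrow> a + b = k"
    using assms(1) by (auto simp: column_def not_less)
  moreover have "(\<forall>j<k. column a b j = 1 \<longrightarrow> 0 \<notin> set (c ! j)) \<longleftrightarrow> b = 0 \<or> zero_words k c \<le> a"
    if "c \<in> chains n k"
  proof -
    have "(\<forall>j<k. column a b j = 1 \<longrightarrow> 0 \<notin> set (c ! j)) \<longleftrightarrow>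
        (\<forall>j. a \<le> j \<and> j < a + b \<longrightarrow> zero_words k c \<le> j)"
      using assms(1) zero_in_chain_iff[OF that] by (auto simp: column_def not_less)
    also have "\<dots> \<longleftrightarrow> b = 0 \<or> zero_words k c \<le> a"
      by (cases b) auto
    finally show ?thesis .
  qed
  ultimately show ?thesis
    by blast
qed

lemma zero_words_append_column:
  assumes "c \<in> chains n k" "a \<le> k"
  shows "zero_words k (append_column (column a b) c) = max (zero_words k c) a"
proof -
  have "length c = k"
    using assms(1) by (simp add: chains_def)
  then have "{j. j < k \<and> 0 \<in> set (append_column (column a b) c ! j)} =
      {j. j < k \<and> (0 \<in> set (c ! j) \<or> j < a)}"
    by (auto simp: column_def split: if_splits)
  also have "\<dots> = {..<max (zero_words k c) a}"
    using zero_in_chain_iff[OF assms(1)] zero_words_le[of k c] assms(2) by auto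
  finally show ?thesis
    by (simp add: zero_words_def)
qed

lemma append_column_column_inj:
  assumes "append_column (column a b) c = append_column (column a' b') c'"
    and "length c = k" "length c' = k" "a + b \<le> k" "a' + b' \<le> k"
  shows "c = c' \<and> a = a' \<and> b = b'"
proof -
  have "c ! j @ [column a b j] = c' ! j @ [column a' b' j]" if "j < k" for j
    using assms(1-3) nth_append_column that by metis
  then have "c = c'" "\<forall>j<k. column a b j = column a' b' j"
    using assms(2,3) by (auto intro: nth_equalityI)
  then show ?thesis
    using column_inj[OF assms(4,5)] by simp
qed

lemma Tr_last_le: "w \<in> Tr (Suc n) \<Longrightarrow> last w \<le> 2"
  by (cases w rule: rev_cases) (auto simp: Tr_def is_triword_def)

lemma chain_last_le:
  assumes "c \<in> chains (Suc n) k" "i \<le> j" "j < k"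
  shows "last (c ! i) \<le> last (c ! j)"
proof -
  have "length (c ! i) = Suc n" "length (c ! j) = Suc n"
    using assms length_Tr by (simp_all add: chains_def)
  moreover from this have "c ! i \<noteq> []" "c ! j \<noteq> []"
    by auto
  ultimately show ?thesis
    using chain_word_le[OF assms] by (simp add: word_le_def last_conv_nth)
qed

lemma chain_Suc_eq_append_column:
  assumes "c' \<in> chains (Suc n) k"
  obtains a b where "a + b \<le> k" "c' = append_column (column a b) (map butlast c')"
proof -
  have "\<exists>a b. a + b \<le> k \<and> (\<forall>j<k. last (c' ! j) = column a b j)"
    using assms chain_last_le Tr_last_le
    by (intro monotone_column_eq_column) (auto simp: chains_def)
  then obtain a b where ab: "a + b \<le> k" "\<forall>j<k. last (c' ! j) = column a b j"
    by blast
  have "c' ! j = butlast (c' ! j) @ [column a b j]" if "j < k" for j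
  proof -
    have "c' ! j \<noteq> []"
      using assms that length_Tr[of "c' ! j" "Suc n"] by (auto simp: chains_def)
    then show ?thesis
      using ab(2) that by (metis append_butlast_last_id)
  qed
  then have "c' = append_column (column a b) (map butlast c')"
    using assms by (intro nth_equalityI[of c']) (simp_all add: chains_def)
  with ab(1) show thesis
    by (rule that)
qed

section \<open>Counting chains by the number of words containing 0\<close>

definition chains_with_zeros :: "nat \<Rightarrow> nat \<Rightarrow> nat \<Rightarrow> nat list list set" where
  "chains_with_zeros n k M = {c \<in> chains n k. zero_words k c = M}"

(*
  The columns (a, b) that extend a chain with M words containing 0 to one with M' such words:
  the first letter of a triword is not 2, and a word may only receive a 1 if it has no 0.
*)
definition column_choices :: "nat \<Rightarrow> nat \<Rightarrow> nat \<Rightarrow> nat \<Rightarrow> (nat \<times> nat) set" where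
  "column_choices n k M M' =
     {(a, b). a + b \<le> k \<and> (n = 0 \<longrightarrow> a + b = k) \<and> (b = 0 \<or> M \<le> a) \<and> max M a = M'}"

lemma finite_column_choices: "finite (column_choices n k M M')"
  by (rule finite_subset[of _ "{..k} \<times> {..k}"]) (auto simp: column_choices_def)

lemma chains_with_zeros_Suc:
  "chains_with_zeros (Suc n) k M' = (\<lambda>(c, a, b). append_column (column a b) c) `
     (SIGMA c:chains n k. column_choices n k (zero_words k c) M')"
proof (intro equalityI subsetI)
  fix c' assume "c' \<in> chains_with_zeros (Suc n) k M'"
  then have c': "c' \<in> chains (Suc n) k" "zero_words k c' = M'"
    by (auto simp: chains_with_zeros_def)
  obtain a b where ab: "a + b \<le> k" "c' = append_column (column a b) (map butlast c')"
    using chain_Suc_eq_append_column[OF c'(1)] by blast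
  define c where "c = map butlast c'"
  have "length c = k"
    using c'(1) by (simp add: c_def chains_def)
  then have c: "c \<in> chains n k" "n = 0 \<longrightarrow> a + b = k" "b = 0 \<or> zero_words k c \<le> a"
    using append_column_column_in_chains_iff[OF ab(1)] c'(1) ab(2) by (simp_all flip: c_def)
  moreover have "max (zero_words k c) a = M'"
    using zero_words_append_column[OF c(1)] ab c'(2) by (simp flip: c_def)
  ultimately show "c' \<in> (\<lambda>(c, a, b). append_column (column a b) c) `
      (SIGMA c:chains n k. column_choices n k (zero_words k c) M')"
    using ab by (intro image_eqI[of _ _ "(c, a, b)"]) (auto simp: column_choices_def c_def)
next
  fix c' assume "c' \<in> (\<lambda>(c, a, b). append_column (column a b) c) `
      (SIGMA c:chains n k. column_choices n k (zero_words k c) M')"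
  then obtain c a b where c: "c \<in> chains n k" "(a, b) \<in> column_choices n k (zero_words k c) M'"
    and c': "c' = append_column (column a b) c"
    by auto
  have "length c = k"
    using c(1) by (simp add: chains_def)
  then show "c' \<in> chains_with_zeros (Suc n) k M'"
    using c c' append_column_column_in_chains_iff zero_words_append_column
    by (auto simp: chains_with_zeros_def column_choices_def)
qed

lemma card_chains_with_zeros_Suc:
  "card (chains_with_zeros (Suc n) k M') =
     (\<Sum>c\<in>chains n k. card (column_choices n k (zero_words k c) M'))"
proof -
  have "inj_on (\<lambda>(c, a, b). append_column (column a b) c)
      (SIGMA c:chains n k. column_choices n k (zero_words k c) M')"
    by (auto simp: inj_on_def chains_def column_choices_def dest: append_column_column_inj)
  then have "card (chains_with_zeros (Suc n) k M') =
      card (SIGMA c:chains n k. column_choices n k (zero_words k c) M')"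
    unfolding chains_with_zeros_Suc by (rule card_image)
  also have "\<dots> = (\<Sum>c\<in>chains n k. card (column_choices n k (zero_words k c) M'))"
    by (rule card_SigmaI) (simp_all add: finite_chains finite_column_choices)
  finally show ?thesis .
qed

lemma card_column_choices_Suc:
  assumes "M \<le> k"
  shows "card (column_choices (Suc n) k M M') =
    (if M' = M then k + 1 else if M < M' then k + 1 - M' else 0)"
proof -
  consider "M' = M" | "M < M'" | "M' < M"
    by linarith
  then show ?thesis
  proof cases
    case 1
    have "column_choices (Suc n) k M M' = (\<lambda>a. (a, 0)) ` {..M} \<union> Pair M ` {1..k - M}"
      using 1 assms by (auto simp: column_choices_def image_iff)
    moreover have "card ((\<lambda>a. (a, 0::nat)) ` {..M}) = M + 1" "card (Pair M ` {1..k - M}) = k - M"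
      by (simp_all add: card_image inj_on_def)
    moreover have "(\<lambda>a. (a, 0)) ` {..M} \<inter> Pair M ` {1..k - M} = {}"
      by auto
    ultimately show ?thesis
      using 1 assms by (simp add: card_Un_disjoint)
  next
    case 2
    then have "column_choices (Suc n) k M M' = Pair M' ` {..<k + 1 - M'}"
      using assms by (auto simp: column_choices_def image_iff)
    then show ?thesis
      using 2 by (simp add: card_image inj_on_def)
  next
    case 3
    then have "column_choices (Suc n) k M M' = {}"
      by (auto simp: column_choices_def)
    then show ?thesis
      using 3 by simp
  qed
qed

lemma chains_0: "chains 0 k = {replicate k []}"
  by (auto simp: chains_def Tr_def is_triword_def word_le_def intro!: nth_equalityI)

lemma card_chains_with_zeros_1: "card (chains_with_zeros (Suc 0) k M) = (if M \<le> k then 1 else 0)"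
proof -
  have "zero_words k (replicate k []) = 0"
    by (simp add: zero_words_def)
  moreover have "column_choices 0 k 0 M = (if M \<le> k then {(M, k - M)} else {})"
    by (auto simp: column_choices_def)
  ultimately show ?thesis
    by (simp add: card_chains_with_zeros_Suc chains_0)
qed

lemma card_chains_with_zeros_Suc_Suc:
  "card (chains_with_zeros (Suc (Suc n)) k M') = (k + 1) * card (chains_with_zeros (Suc n) k M') +
     (k + 1 - M') * (\<Sum>M<M'. card (chains_with_zeros (Suc n) k M))"
proof -
  let ?C = "chains (Suc n) k"
  have "card (chains_with_zeros (Suc (Suc n)) k M') =
      (\<Sum>c\<in>?C. (if zero_words k c = M' then k + 1 else 0) +
        (if zero_words k c < M' then k + 1 - M' else 0))"
    unfolding card_chains_with_zeros_Suc
    by (intro sum.cong refl) (simp add: card_column_choices_Suc zero_words_le)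
  also have "\<dots> = (k + 1) * card {c \<in> ?C. zero_words k c = M'} +
      (k + 1 - M') * card {c \<in> ?C. zero_words k c < M'}"
    by (simp add: sum.distrib sum.inter_filter[symmetric] finite_chains)
  also have "{c \<in> ?C. zero_words k c < M'} = (\<Union>M<M'. chains_with_zeros (Suc n) k M)"
    by (auto simp: chains_with_zeros_def)
  also have "card \<dots> = (\<Sum>M<M'. card (chains_with_zeros (Suc n) k M))"
    by (rule card_UN_disjoint) (auto simp: chains_with_zeros_def finite_chains)
  finally show ?thesis
    by (simp add: chains_with_zeros_def)
qed

lemma card_chains_eq_sum: "card (chains n k) = (\<Sum>M\<le>k. card (chains_with_zeros n k M))"
proof -
  have "chains n k = (\<Union>M\<le>k. chains_with_zeros n k M)"
    using zero_words_le by (auto simp: chains_with_zeros_def)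
  also have "card \<dots> = (\<Sum>M\<le>k. card (chains_with_zeros n k M))"
    by (rule card_UN_disjoint) (auto simp: chains_with_zeros_def finite_chains)
  finally show ?thesis .
qed

lemma zeta_eq_card_chains_with_zeros:
  assumes "i \<le> k"
  shows "zeta i n k = card (chains_with_zeros n k (k - i))"
proof -
  have "(\<forall>j<k. (j < k - i \<longrightarrow> 0 \<in> set (c ! j)) \<and> (k - i \<le> j \<longrightarrow> 0 \<notin> set (c ! j))) \<longleftrightarrow>
      zero_words k c = k - i" if "c \<in> chains n k" for c
  proof -
    have "(\<forall>j<k. (j < k - i \<longrightarrow> 0 \<in> set (c ! j)) \<and> (k - i \<le> j \<longrightarrow> 0 \<notin> set (c ! j))) \<longleftrightarrow>
        (\<forall>j<k. j < k - i \<longleftrightarrow> j < zero_words k c)"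
      using zero_in_chain_iff[OF that] by auto
    also have "\<dots> \<longleftrightarrow> zero_words k c = k - i"
    proof
      assume same: "\<forall>j<k. j < k - i \<longleftrightarrow> j < zero_words k c"
      show "zero_words k c = k - i"
      proof (rule ccontr)
        assume "zero_words k c \<noteq> k - i"
        moreover have "min (zero_words k c) (k - i) < k"
          using calculation zero_words_le[of k c] by linarith
        ultimately show False
          using same by (metis min_less_iff_conj nat_neq_iff min.strict_order_iff)
      qed
    qed simp
    finally show ?thesis .
  qed
  then show ?thesis
    unfolding zeta_def chains_with_zeros_def by (metis (lifting))
qed

lemma sum_zeta_eq_card_chains: "(\<Sum>i = 0..k. zeta i n k) = card (chains n k)"
proof -
  have "(\<Sum>i = 0..k. zeta i n k) = (\<Sum>i = 0..k. card (chains_with_zeros n k (k - i)))"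
    by (intro sum.cong refl) (simp add: zeta_eq_card_chains_with_zeros)
  also have "\<dots> = (\<Sum>M\<le>k. card (chains_with_zeros n k M))"
    by (rule sum.reindex_bij_witness[of _ "\<lambda>M. k - M" "\<lambda>i. k - i"]) auto
  finally show ?thesis
    by (simp add: card_chains_eq_sum)
qed

(*
  The nilpotent part N of the recurrence: if v M counts the chains with M words containing 0,
  then N v M' counts their one-column extensions that strictly raise this number to M'.
*)
definition zero_growth :: "nat \<Rightarrow> (nat \<Rightarrow> 'a::comm_semiring_1) \<Rightarrow> nat \<Rightarrow> 'a" where
  "zero_growth k v M = of_nat (k + 1 - M) * (\<Sum>M0<M. v M0)"

lemma zero_growth_add: "zero_growth k (\<lambda>M. u M + v M) = (\<lambda>M. zero_growth k u M + zero_growth k v M)"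
  by (simp add: zero_growth_def fun_eq_iff sum.distrib ring_distribs)

lemma zero_growth_scale: "zero_growth k (\<lambda>M. c * u M) = (\<lambda>M. c * zero_growth k u M)"
  by (simp add: zero_growth_def fun_eq_iff sum_distrib_left mult.left_commute)

lemma zero_growth_above: "k < M \<Longrightarrow> zero_growth k v M = 0"
  by (simp add: zero_growth_def)

lemma funpow_zero_growth_below: "M < j \<Longrightarrow> (zero_growth k ^^ j) v M = 0"
proof (induction j arbitrary: M)
  case (Suc j)
  then show ?case
    by (simp add: zero_growth_def)
qed simp

lemma funpow_zero_growth_nilpotent: "(zero_growth k ^^ Suc k) v = (\<lambda>M. 0)"
proof
  fix M
  show "(zero_growth k ^^ Suc k) v M = 0"
  proof (cases "M \<le> k")
    case True
    then show ?thesis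
      by (intro funpow_zero_growth_below) simp
  qed (simp add: zero_growth_above)
qed

lemma funpow_zero_growth_diagonal: "(zero_growth k ^^ j) v j = of_nat (\<Prod>i<j. k - i) * v 0"
proof (induction j)
  case (Suc j)
  have "(zero_growth k ^^ Suc j) v (Suc j) = of_nat (k - j) * (\<Sum>M<Suc j. (zero_growth k ^^ j) v M)"
    using zero_growth_def[of k "(zero_growth k ^^ j) v" "Suc j"] by simp
  also have "\<dots> = of_nat (k - j) * (zero_growth k ^^ j) v j"
    by (simp add: funpow_zero_growth_below)
  finally show ?case
    using Suc by (simp add: mult_ac)
qed simp

(* The vector of ones on {..k} counts the one-letter chains by their words containing 0. *)
definition growth_total :: "nat \<Rightarrow> nat \<Rightarrow> 'a::comm_semiring_1" where
  "growth_total k j = (\<Sum>M\<le>k. (zero_growth k ^^ j) (\<lambda>M. if M \<le> k then 1 else 0) M)"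

lemma growth_total_top: "growth_total k k = fact k"
proof -
  have "growth_total k k = (zero_growth k ^^ k) (\<lambda>M. if M \<le> k then 1 else 0) k"
    by (simp add: growth_total_def lessThan_Suc_atMost[symmetric] funpow_zero_growth_below)
  also have "\<dots> = fact k"
    by (simp add: funpow_zero_growth_diagonal fact_prod_rev atLeast0LessThan)
  finally show ?thesis .
qed

lemma card_chains_Suc_binomial:
  fixes k m :: nat and K :: "'a::field_char_0"
  defines "K \<equiv> of_nat (k + 1)"
  shows "of_nat (card (chains (Suc m) k)) =
    K powi (int m - int k) * (\<Sum>j\<le>k. of_nat (m choose j) * (K ^ (k - j) * growth_total k j))"
proof -
  have "K \<noteq> 0"
    using of_nat_neq_0[of k, where ?'a = 'a] by (simp add: K_def)
  define x :: "nat \<Rightarrow> nat \<Rightarrow> 'a" where "x m M = of_nat (card (chains_with_zeros (Suc m) k M))" for m M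
  have x0: "x 0 = (\<lambda>M. if M \<le> k then 1 else 0)"
    by (simp add: fun_eq_iff x_def card_chains_with_zeros_1)
  have "x (Suc m) = (\<lambda>M. K * x m M + zero_growth k (x m) M)" for m
    by (simp add: fun_eq_iff x_def K_def card_chains_with_zeros_Suc_Suc zero_growth_def distrib_right)
  then have x: "x m M = (\<Sum>j\<le>k. of_nat (m choose j) * K powi (int m - int j) * (zero_growth k ^^ j) (x 0) M)"
    for M
    using \<open>K \<noteq> 0\<close>
    by (intro linear_recurrence_binomial zero_growth_add zero_growth_scale funpow_zero_growth_nilpotent)
  have "of_nat (card (chains (Suc m) k)) = (\<Sum>M\<le>k. x m M)"
    by (simp add: card_chains_eq_sum x_def)
  also have "\<dots> = (\<Sum>j\<le>k. of_nat (m choose j) * K powi (int m - int j) * growth_total k j)"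
    unfolding x sum_distrib_left growth_total_def x0 by (rule sum.swap)
  also have "\<dots> = (\<Sum>j\<le>k. K powi (int m - int k) * (of_nat (m choose j) * (K ^ (k - j) * growth_total k j)))"
    using power_int_diff_split[OF \<open>K \<noteq> 0\<close>] by (intro sum.cong refl) (simp add: mult_ac)
  finally show ?thesis
    by (simp only: sum_distrib_left)
qed

lemma card_chains_poly:
  "\<exists>P :: rat poly. degree P = k \<and> lead_coeff P = 1 \<and> (\<forall>n \<ge> 1.
     of_nat (card (chains n k)) = of_nat (k + 1) powi (int n - int (k + 1)) * poly P (of_nat n))"
proof -
  define K :: rat where "K = of_nat (k + 1)"
  have "K ^ (k - k) * growth_total k k = fact k"
    by (simp add: growth_total_top)
  then obtain P where "degree P = k" "lead_coeff P = 1" and P: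
    "\<forall>m. poly P (of_nat (Suc m)) = (\<Sum>j\<le>k. of_nat (m choose j) * (K ^ (k - j) * growth_total k j))"
    using binomial_sum_poly[of "\<lambda>j. K ^ (k - j) * growth_total k j" k] by auto
  have "of_nat (card (chains n k)) = K powi (int n - int (k + 1)) * poly P (of_nat n)" if "n \<ge> 1" for n
  proof -
    obtain m where "n = Suc m"
      using \<open>n \<ge> 1\<close> not0_implies_Suc by force
    then show ?thesis
      using card_chains_Suc_binomial[of m k] P by (simp add: K_def)
  qed
  with \<open>degree P = k\<close> \<open>lead_coeff P = 1\<close> show ?thesis
    unfolding K_def by blast
qed

theorem proposition3p7:
  fixes k :: nat
  assumes "k \<ge> 1"
  shows "\<exists>P :: rat poly. lead_coeff P = 1 \<and> degree P = k \<and>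
    (\<forall>n \<ge> 2.
       of_nat (card (chains n k)) = (of_nat (k + 1) :: rat) powi (int n - int (k + 1)) * poly P (of_nat n)
     \<and> of_nat (\<Sum>i = 0..k. zeta i n k) = (of_nat (k + 1) :: rat) powi (int n - int (k + 1)) * poly P (of_nat n))"
proof -
  obtain P :: "rat poly" where "degree P = k" "lead_coeff P = 1"
    and "\<forall>n \<ge> 1. of_nat (card (chains n k)) =
      of_nat (k + 1) powi (int n - int (k + 1)) * poly P (of_nat n)"
    using card_chains_poly by blast
  then show ?thesis
    by (intro exI[of _ P]) (simp add: sum_zeta_eq_card_chains)
qed

end
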